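(* Let $G$ be a connected graph containing two adjacent vertices $v_0,v_1$ such that the distance in $G$ from $v_0$ to every other vertex of $G$ is less than $\mathrm{diam}(G)$. Let $G'$ be obtained from $G$ by adding new vertices $v_2,v_3,\dots,v_n$ and the edges $v_1v_2, v_2v_3,\dots,v_{n-1}v_n$ and $v_0v_2, v_0v_3,\dots,v_0v_n$. Then $\mathrm{diam}(G')=\mathrm{diam}(G)$.
   Context: $\mathrm{diam}(G)$ denotes the diameter of a connected graph $G$, the maximum distance between two of its vertices. The vertices $v_2,\dots,v_n$ are new vertices not in $G$. *)

theory Defs
  imports Main
begin

definition simple_graph :: "'a set \<Rightarrow> ('a \<Rightarrow> 'a \<Rightarrow> bool) \<Rightarrow> bool" where
  "simple_graph V E \<longleftrightarrow> finite V \<and> (\<forall>x y. E x y \<longrightarrow> x \<in> V \<and> y \<in> V)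
     \<and> (\<forall>x y. E x y \<longrightarrow> E y x) \<and> (\<forall>x. \<not> E x x)"

definition walk :: "'a set \<Rightarrow> ('a \<Rightarrow> 'a \<Rightarrow> bool) \<Rightarrow> 'a list \<Rightarrow> bool" where
  "walk V E xs \<longleftrightarrow> xs \<noteq> [] \<and> set xs \<subseteq> V \<and> (\<forall>i. Suc i < length xs \<longrightarrow> E (xs ! i) (xs ! Suc i))"

definition connected_graph :: "'a set \<Rightarrow> ('a \<Rightarrow> 'a \<Rightarrow> bool) \<Rightarrow> bool" where
  "connected_graph V E \<longleftrightarrow> V \<noteq> {} \<and>
     (\<forall>u\<in>V. \<forall>w\<in>V. \<exists>xs. walk V E xs \<and> hd xs = u \<and> last xs = w)"

definition dist :: "'a set \<Rightarrow> ('a \<Rightarrow> 'a \<Rightarrow> bool) \<Rightarrow> 'a \<Rightarrow> 'a \<Rightarrow> nat" where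
  "dist V E u w = (LEAST k. \<exists>xs. walk V E xs \<and> hd xs = u \<and> last xs = w \<and> length xs = Suc k)"

definition diam :: "'a set \<Rightarrow> ('a \<Rightarrow> 'a \<Rightarrow> bool) \<Rightarrow> nat" where
  "diam V E = Max {dist V E u w | u w. u \<in> V \<and> w \<in> V}"

end

theory Submission
  imports Defs
begin

text \<open>
  Every new vertex is adjacent to \<open>v\<^sub>0\<close>, and \<open>v\<^sub>0\<close> has eccentricity less than \<open>diam(G)\<close>,
  so a new vertex is within \<open>diam(G)\<close> of every old one and within 2 of every new one;
  hence \<open>diam(G') \<le> diam(G)\<close>. Conversely, collapsing all new vertices onto \<open>v\<^sub>0\<close> maps
  every edge of \<open>G'\<close> to an edge of \<open>G\<close> or to a single vertex (the edge \<open>v\<^sub>1v\<^sub>2\<close> goes to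
  \<open>v\<^sub>1v\<^sub>0\<close>), so distances between old vertices do not shrink in \<open>G'\<close> and \<open>diam(G) \<le> diam(G')\<close>.
\<close>

lemma walk_Cons_Cons [simp]:
  "walk V E (x # y # zs) \<longleftrightarrow> x \<in> V \<and> E x y \<and> walk V E (y # zs)"
  unfolding walk_def by (auto simp: nth_Cons split: nat.splits)

lemma walk_singleton [simp]: "walk V E [x] \<longleftrightarrow> x \<in> V"
  unfolding walk_def by auto

lemma walk_Cons:
  "ys \<noteq> [] \<Longrightarrow> walk V E (x # ys) \<longleftrightarrow> x \<in> V \<and> E x (hd ys) \<and> walk V E ys"
  by (cases ys) auto

lemma walk_nonempty: "walk V E xs \<Longrightarrow> xs \<noteq> []"
  unfolding walk_def by blast

lemma walk_append:
  assumes "xs \<noteq> []" "ys \<noteq> []"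
  shows "walk V E (xs @ ys) \<longleftrightarrow> walk V E xs \<and> E (last xs) (hd ys) \<and> walk V E ys"
  using assms(1)
proof (induction xs rule: induct_list012)
  case (2 x)
  then show ?case using assms(2) by (simp add: walk_Cons)
next
  case (3 x y zs)
  then show ?case by simp
qed simp

lemma walk_rev:
  assumes "symp E" "walk V E xs"
  shows "walk V E (rev xs)"
  using assms(2)
proof (induction xs rule: induct_list012)
  case (3 x y zs)
  then have "walk V E (rev zs @ [y])" by simp
  moreover have "E y x" "x \<in> V" using "3.prems" \<open>symp E\<close> by (auto dest: sympD)
  ultimately have "walk V E ((rev zs @ [y]) @ [x])"
    by (subst walk_append) auto
  then show ?case by simp
qed simp_all

lemma walk_mono:
  assumes "walk V E xs" "V \<subseteq> V'" "\<And>x y. E x y \<Longrightarrow> E' x y"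
  shows "walk V' E' xs"
  using assms unfolding walk_def by blast

lemma dist_le_walk:
  assumes "walk V E xs" "hd xs = u" "last xs = w"
  shows "dist V E u w \<le> length xs - 1"
proof -
  have "length xs = Suc (length xs - 1)"
    using walk_nonempty[OF assms(1)] by simp
  with assms show ?thesis
    unfolding dist_def by (intro Least_le) blast
qed

lemma shortest_walk_exists:
  assumes "walk V E xs" "hd xs = u" "last xs = w"
  obtains ys where "walk V E ys" "hd ys = u" "last ys = w" "length ys = Suc (dist V E u w)"
proof -
  have "length xs = Suc (length xs - 1)"
    using walk_nonempty[OF assms(1)] by simp
  with assms have "\<exists>k ys. walk V E ys \<and> hd ys = u \<and> last ys = w \<and> length ys = Suc k"
    by blast
  from LeastI_ex[OF this] that show ?thesis
    unfolding dist_def by blast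
qed

lemma dist_self: "u \<in> V \<Longrightarrow> dist V E u u = 0"
  using dist_le_walk[of V E "[u]"] by simp

lemma dist_eq_0_iff:
  assumes "walk V E xs" "hd xs = u" "last xs = w"
  shows "dist V E u w = 0 \<longleftrightarrow> u = w"
proof
  assume "dist V E u w = 0"
  then obtain ys where "walk V E ys" "hd ys = u" "last ys = w" "length ys = 1"
    using shortest_walk_exists[OF assms] by auto
  then show "u = w" by (cases ys) auto
next
  assume "u = w"
  moreover have "u \<in> V" using assms walk_nonempty[OF assms(1)] unfolding walk_def by auto
  ultimately show "dist V E u w = 0" by (simp add: dist_self)
qed

lemma dist_sym:
  assumes "symp E"
  shows "dist V E u w = dist V E w u"
proof -
  have reverse: "\<exists>ys. walk V E ys \<and> hd ys = b \<and> last ys = a \<and> length ys = k"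
    if "walk V E xs" "hd xs = a" "last xs = b" "length xs = k" for xs a b k
    using that walk_rev[OF assms that(1)] walk_nonempty[OF that(1)]
    by (intro exI[of _ "rev xs"]) (simp add: hd_rev last_rev)
  have "(\<lambda>k. \<exists>xs. walk V E xs \<and> hd xs = u \<and> last xs = w \<and> length xs = Suc k)
      = (\<lambda>k. \<exists>xs. walk V E xs \<and> hd xs = w \<and> last xs = u \<and> length xs = Suc k)"
    by (intro ext iffI) (use reverse in blast)+
  then show ?thesis unfolding dist_def by simp
qed

lemma dist_le_if_subgraph:
  assumes "walk V E xs" "hd xs = u" "last xs = w" "V \<subseteq> V'" "\<And>x y. E x y \<Longrightarrow> E' x y"
  shows "dist V' E' u w \<le> dist V E u w"
proof -
  obtain ys where ys: "walk V E ys" "hd ys = u" "last ys = w" "length ys = Suc (dist V E u w)"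
    using shortest_walk_exists[OF assms(1-3)] .
  have "walk V' E' ys"
    using walk_mono[OF ys(1) assms(4,5)] .
  from dist_le_walk[OF this ys(2,3)] ys(4) show ?thesis
    by simp
qed

lemma walk_collapse:
  assumes "walk V' E' xs" "\<And>x. x \<in> V' \<Longrightarrow> p x \<in> V"
    and "\<And>x y. x \<in> V' \<Longrightarrow> y \<in> V' \<Longrightarrow> E' x y \<Longrightarrow> p x = p y \<or> E (p x) (p y)"
  shows "\<exists>ys. walk V E ys \<and> hd ys = p (hd xs) \<and> last ys = p (last xs) \<and> length ys \<le> length xs"
  using assms(1)
proof (induction xs rule: induct_list012)
  case (2 x)
  then show ?case using assms(2) by (intro exI[of _ "[p x]"]) simp
next
  case (3 x y zs)
  have x: "x \<in> V'" "E' x y" and yzs: "walk V' E' (y # zs)"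
    using "3.prems" by auto
  then have "y \<in> V'"
    by (simp add: walk_def)
  obtain ys where ys: "walk V E ys" "hd ys = p y" "last ys = p (last (y # zs))"
      "length ys \<le> length (y # zs)"
    using "3.IH"(2)[OF yzs] by auto
  have "p x = p y \<or> E (p x) (p y)" "p x \<in> V"
    using assms(2,3) x \<open>y \<in> V'\<close> by auto
  then show ?case
  proof (elim disjE)
    assume "p x = p y"
    with ys show ?thesis by (intro exI[of _ ys]) auto
  next
    assume "E (p x) (p y)"
    with ys walk_nonempty[OF ys(1)] \<open>p x \<in> V\<close> show ?thesis
      by (intro exI[of _ "p x # ys"]) (auto simp: walk_Cons)
  qed
qed (simp add: walk_def)

lemma dist_le_if_collapse:
  assumes "walk V' E' xs" "hd xs = u" "last xs = w" "\<And>x. x \<in> V' \<Longrightarrow> p x \<in> V"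
    and "\<And>x y. x \<in> V' \<Longrightarrow> y \<in> V' \<Longrightarrow> E' x y \<Longrightarrow> p x = p y \<or> E (p x) (p y)"
  shows "dist V E (p u) (p w) \<le> dist V' E' u w"
proof -
  obtain xs' where xs': "walk V' E' xs'" "hd xs' = u" "last xs' = w"
      "length xs' = Suc (dist V' E' u w)"
    using shortest_walk_exists[OF assms(1-3)] .
  obtain ys where ys: "walk V E ys" "hd ys = p (hd xs')" "last ys = p (last xs')"
      "length ys \<le> length xs'"
    using walk_collapse[of V' E' xs' p V E, OF xs'(1) assms(4,5)] by blast
  have "dist V E (p u) (p w) \<le> length ys - 1"
    using dist_le_walk[OF ys(1-3)] xs'(2,3) by simp
  with ys(4) xs'(4) show ?thesis
    by simp
qed

lemma connected_graph_walk:
  assumes "connected_graph V E" "u \<in> V" "w \<in> V"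
  obtains xs where "walk V E xs" "hd xs = u" "last xs = w"
  using assms unfolding connected_graph_def by auto

lemma finite_dists:
  "finite V \<Longrightarrow> finite {dist V E u w | u w. u \<in> V \<and> w \<in> V}"
  by (intro finite_image_set2) simp_all

lemma dist_le_diam:
  "finite V \<Longrightarrow> u \<in> V \<Longrightarrow> w \<in> V \<Longrightarrow> dist V E u w \<le> diam V E"
  unfolding diam_def by (intro Max_ge finite_dists) auto

lemma diam_attained:
  assumes "finite V" "V \<noteq> {}"
  obtains u w where "u \<in> V" "w \<in> V" "dist V E u w = diam V E"
proof -
  have "{dist V E u w | u w. u \<in> V \<and> w \<in> V} \<noteq> {}"
    using assms(2) by blast
  from Max_in[OF finite_dists[OF assms(1)] this] that show ?thesis
    unfolding diam_def by force
qed

lemma diam_le: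
  assumes "finite V" "V \<noteq> {}" "\<And>u w. u \<in> V \<Longrightarrow> w \<in> V \<Longrightarrow> dist V E u w \<le> k"
  shows "diam V E \<le> k"
proof -
  obtain u w where "u \<in> V" "w \<in> V" "dist V E u w = diam V E"
    using diam_attained[OF assms(1,2)] .
  with assms(3) show ?thesis
    by fastforce
qed

lemma diam_le_if_new_vertices_adjacent:
  assumes "connected_graph V E" "finite V'" "V \<subseteq> V'" "\<And>x y. E x y \<Longrightarrow> E' x y" "symp E'"
    and "c \<in> V" "\<And>x. x \<in> V' - V \<Longrightarrow> E' x c"
    and "\<And>w. w \<in> V \<Longrightarrow> w \<noteq> c \<Longrightarrow> dist V E c w < diam V E" "2 \<le> diam V E"
  shows "diam V' E' \<le> diam V E"
proof -
  have "finite V"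
    using assms(2,3) finite_subset by blast
  have old_old: "dist V' E' x y \<le> diam V E" if x: "x \<in> V" and y: "y \<in> V" for x y
  proof -
    obtain xs where "walk V E xs" "hd xs = x" "last xs = y"
      using connected_graph_walk[OF assms(1) x y] .
    then have "dist V' E' x y \<le> dist V E x y"
      using assms(3,4) by (rule dist_le_if_subgraph)
    also have "\<dots> \<le> diam V E"
      using \<open>finite V\<close> x y by (rule dist_le_diam)
    finally show ?thesis .
  qed
  have new_old: "dist V' E' x w \<le> diam V E" if x: "x \<in> V' - V" and w: "w \<in> V" for x w
  proof -
    obtain xs where "walk V E xs" "hd xs = c" "last xs = w"
      using connected_graph_walk[OF assms(1,6) w] .
    then obtain ys where ys: "walk V E ys" "hd ys = c" "last ys = w"
        "length ys = Suc (dist V E c w)"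
      by (rule shortest_walk_exists)
    have "walk V' E' ys"
      using ys(1) assms(3,4) by (rule walk_mono)
    then have "walk V' E' (x # ys)"
      using walk_nonempty[OF ys(1)] ys(2) assms(7) x by (simp add: walk_Cons)
    from dist_le_walk[OF this] walk_nonempty[OF ys(1)] ys(2-4)
    have "dist V' E' x w \<le> Suc (dist V E c w)"
      by simp
    moreover have "Suc (dist V E c w) \<le> diam V E"
    proof (cases "w = c")
      case True
      then show ?thesis using dist_self[OF assms(6)] assms(9) by simp
    next
      case False
      then show ?thesis using assms(8)[OF w] by simp
    qed
    ultimately show ?thesis by linarith
  qed
  have new_new: "dist V' E' x y \<le> diam V E" if "x \<in> V' - V" "y \<in> V' - V" for x y
  proof -
    have "E' x c" "E' c y" "c \<in> V'"
      using assms(3,6,7) that sympD[OF assms(5) assms(7)[OF that(2)]] by auto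
    then have "walk V' E' [x, c, y]"
      using that by simp
    from dist_le_walk[OF this refl refl] assms(9) show ?thesis
      by simp
  qed
  show ?thesis
  proof (rule diam_le)
    show "finite V'" "V' \<noteq> {}"
      using assms(2,3,6) by auto
    fix x y assume "x \<in> V'" "y \<in> V'"
    then consider "x \<in> V" "y \<in> V" | "x \<in> V' - V" "y \<in> V" | "x \<in> V" "y \<in> V' - V"
      | "x \<in> V' - V" "y \<in> V' - V"
      by blast
    then show "dist V' E' x y \<le> diam V E"
    proof cases
      case 3
      then show ?thesis using new_old[of y x] dist_sym[OF assms(5), of V' x y] by simp
    qed (fact old_old new_old new_new)+
  qed
qed

lemma diam_le_if_retraction:
  assumes "connected_graph V E" "finite V'" "V \<subseteq> V'" "\<And>x y. E x y \<Longrightarrow> E' x y"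
    and "\<And>x. x \<in> V \<Longrightarrow> p x = x" "\<And>x. x \<in> V' \<Longrightarrow> p x \<in> V"
    and "\<And>x y. x \<in> V' \<Longrightarrow> y \<in> V' \<Longrightarrow> E' x y \<Longrightarrow> p x = p y \<or> E (p x) (p y)"
  shows "diam V E \<le> diam V' E'"
proof -
  have "finite V" "V \<noteq> {}"
    using assms(1-3) finite_subset unfolding connected_graph_def by auto
  then obtain u w where uw: "u \<in> V" "w \<in> V" "dist V E u w = diam V E"
    by (rule diam_attained)
  obtain xs where xs: "walk V E xs" "hd xs = u" "last xs = w"
    using connected_graph_walk[OF assms(1) uw(1,2)] .
  have "diam V E = dist V E (p u) (p w)"
    using uw assms(5) by simp
  also have "\<dots> \<le> dist V' E' u w"
  proof (rule dist_le_if_collapse)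
    show "walk V' E' xs"
      using xs(1) assms(3,4) by (rule walk_mono)
  qed (use xs assms(6,7) in auto)
  also have "\<dots> \<le> diam V' E'"
    using dist_le_diam[OF assms(2)] uw(1,2) assms(3) by blast
  finally show ?thesis .
qed

definition fan_extension :: "('a \<Rightarrow> 'a \<Rightarrow> bool) \<Rightarrow> (nat \<Rightarrow> 'a) \<Rightarrow> nat \<Rightarrow> 'a \<Rightarrow> 'a \<Rightarrow> bool" where
  "fan_extension E v n x y \<longleftrightarrow> E x y
     \<or> (\<exists>i\<in>{2..n}. (x = v (i - 1) \<and> y = v i) \<or> (x = v i \<and> y = v (i - 1)))
     \<or> (\<exists>i\<in>{2..n}. (x = v 0 \<and> y = v i) \<or> (x = v i \<and> y = v 0))"

definition collapse_into :: "'a set \<Rightarrow> 'a \<Rightarrow> 'a \<Rightarrow> 'a" where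
  "collapse_into V c x = (if x \<in> V then x else c)"

lemma symp_fan_extension: "symp E \<Longrightarrow> symp (fan_extension E v n)"
  unfolding symp_def fan_extension_def by blast

lemma fan_extension_collapse:
  assumes "simple_graph V E" "v 0 \<in> V" "v 1 \<in> V" "E (v 0) (v 1)" "\<forall>i\<in>{2..n}. v i \<notin> V"
    and "fan_extension E v n x y"
  shows "collapse_into V (v 0) x = collapse_into V (v 0) y
    \<or> E (collapse_into V (v 0) x) (collapse_into V (v 0) y)"
proof -
  have "E (v 1) (v 0)" and edge_in_V: "\<And>x y. E x y \<Longrightarrow> x \<in> V \<and> y \<in> V"
    using assms(1,4) unfolding simple_graph_def by blast+
  from assms(6) consider "E x y"
    | (path) i where "i \<in> {2..n}" "{x, y} = {v (i - 1), v i}"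
    | (fan) i where "i \<in> {2..n}" "{x, y} = {v 0, v i}"
    unfolding fan_extension_def by blast
  then show ?thesis
  proof cases
    case 1
    then show ?thesis using edge_in_V[OF 1] by (simp add: collapse_into_def)
  next
    case (path i)
    show ?thesis
    proof (cases "i = 2")
      case True
      with path assms(3-5) \<open>E (v 1) (v 0)\<close> show ?thesis
        by (auto simp: collapse_into_def doubleton_eq_iff)
    next
      case False
      with path have "i - 1 \<in> {2..n}" by auto
      with path assms(5) show ?thesis
        by (auto simp: collapse_into_def doubleton_eq_iff)
    qed
  next
    case (fan i)
    with assms(2,5) show ?thesis
      by (auto simp: collapse_into_def doubleton_eq_iff)
  qed
qed

theorem theorem3p3:
  fixes V :: "'a set" and E :: "'a \<Rightarrow> 'a \<Rightarrow> bool" and v :: "nat \<Rightarrow> 'a" and n :: nat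
  assumes "simple_graph V E" and "connected_graph V E"
    and "v 0 \<in> V" and "v 1 \<in> V" and "E (v 0) (v 1)"
    and "\<forall>w\<in>V. w \<noteq> v 0 \<longrightarrow> dist V E (v 0) w < diam V E"
    and "n \<ge> 2"
    and "inj_on v {0..n}"
    and "\<forall>i\<in>{2..n}. v i \<notin> V"
  shows "diam (V \<union> v ` {2..n})
           (\<lambda>x y. E x y
              \<or> (\<exists>i\<in>{2..n}. (x = v (i - 1) \<and> y = v i) \<or> (x = v i \<and> y = v (i - 1)))
              \<or> (\<exists>i\<in>{2..n}. (x = v 0 \<and> y = v i) \<or> (x = v i \<and> y = v 0)))
         = diam V E"
proof -
  let ?V' = "V \<union> v ` {2..n}" and ?E' = "fan_extension E v n"
  have "finite V" "symp E" "v 0 \<noteq> v 1"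
    using assms(1,5) unfolding simple_graph_def symp_def by auto
  have "dist V E (v 0) (v 1) \<noteq> 0"
    using dist_eq_0_iff[of V E "[v 0, v 1]"] assms(3-5) \<open>v 0 \<noteq> v 1\<close> by simp
  then have "2 \<le> diam V E"
    using assms(4,6) \<open>v 0 \<noteq> v 1\<close> by fastforce
  have "diam ?V' ?E' \<le> diam V E"
  proof (rule diam_le_if_new_vertices_adjacent[where c = "v 0"])
    show "symp ?E'"
      using \<open>symp E\<close> by (rule symp_fan_extension)
  qed (use assms \<open>finite V\<close> \<open>2 \<le> diam V E\<close> in \<open>auto simp: fan_extension_def\<close>)
  moreover have "diam V E \<le> diam ?V' ?E'"
  proof (rule diam_le_if_retraction[where p = "collapse_into V (v 0)"])
    show "collapse_into V (v 0) x = collapse_into V (v 0) y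
        \<or> E (collapse_into V (v 0) x) (collapse_into V (v 0) y)" if "?E' x y" for x y
      using fan_extension_collapse[OF assms(1,3-5,9) that] .
  qed (use assms \<open>finite V\<close> in \<open>auto simp: collapse_into_def fan_extension_def\<close>)
  ultimately show ?thesis
    unfolding fan_extension_def[abs_def] by simp
qed

end
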